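(* Let $\mathcal{G}=\langle A_\alpha,B_\alpha:\alpha<\omega_1\rangle$ be a tight gap and let $X_\mathcal{G}$ be the space on $\omega\cup\{\infty\}$ in which points of $\omega$ are isolated and the neighborhood filter of $\infty$ is generated by the sets $B_\alpha\cup\{\infty\}$, $\alpha<\omega_1$. Then (1) an infinite set $E\subseteq\omega$ converges to $\infty$ if and only if there is $\alpha<\omega_1$ with $E\subseteq^*A_\alpha$; and (2) $X_\mathcal{G}$ is a Fréchet $\alpha_1$-space.
   Context: A tight gap is a sequence $\langle A_\alpha,B_\alpha:\alpha<\omega_1\rangle$ of infinite subsets of $\omega$ such that for all $\alpha<\beta$, $A_\alpha\subseteq^*A_\beta$, $B_\beta\subseteq^*B_\alpha$ and $A_\beta\subseteq^*B_\alpha$; if $E\subseteq^*B_\alpha$ for all $\alpha$ then $E\subseteq^*A_\beta$ for some $\beta$; and if $E\supseteq^*A_\alpha$ for all $\alpha$ then $E\supseteq^*B_\beta$ for some $\beta$. Here $\subseteq^*$ means inclusion up to a finite set. An infinite $E\subseteq\omega$ converges to $\infty$ if every neighborhood of $\infty$ contains all but finitely many elements of $E$. A space is Fréchet if whenever $x\in\overline{A}$ some sequence in $A$ converges to $x$. A space is $\alpha_1$ if for every point $x$ and every countable family of sequences converging to $x$, there is a single sequence converging to $x$ which contains all but finitely many elements of each member of the family. *)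

theory Defs
  imports "HOL-Analysis.Analysis" "HOL-Library.Extended_Nat"
begin

definition almost_subset :: "nat set \<Rightarrow> nat set \<Rightarrow> bool" (infix "\<subseteq>\<^sup>*" 50) where
  "X \<subseteq>\<^sup>* Y \<longleftrightarrow> finite (X - Y)"

text \<open>An index type order-isomorphic to omega_1: a well-order that is uncountable
  and all of whose proper initial segments are countable.\<close>
definition omega1_type :: "'i::wellorder itself \<Rightarrow> bool" where
  "omega1_type _ \<longleftrightarrow> uncountable (UNIV :: 'i set) \<and> (\<forall>a::'i. countable {b. b < a})"

definition tight_gap :: "('i::wellorder \<Rightarrow> nat set) \<Rightarrow> ('i \<Rightarrow> nat set) \<Rightarrow> bool" where
  "tight_gap A B \<longleftrightarrow>
     (\<forall>\<alpha>. infinite (A \<alpha>) \<and> infinite (B \<alpha>)) \<and>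
     (\<forall>\<alpha> \<beta>. \<alpha> < \<beta> \<longrightarrow> A \<alpha> \<subseteq>\<^sup>* A \<beta> \<and> B \<beta> \<subseteq>\<^sup>* B \<alpha> \<and> A \<beta> \<subseteq>\<^sup>* B \<alpha>) \<and>
     (\<forall>E. (\<forall>\<alpha>. E \<subseteq>\<^sup>* B \<alpha>) \<longrightarrow> (\<exists>\<beta>. E \<subseteq>\<^sup>* A \<beta>)) \<and>
     (\<forall>E. (\<forall>\<alpha>. A \<alpha> \<subseteq>\<^sup>* E) \<longrightarrow> (\<exists>\<beta>. B \<beta> \<subseteq>\<^sup>* E))"

text \<open>The space X_G on omega \<union> {\<infinity>} (modelled as enat): points of omega are isolated,
  and the neighbourhood filter of \<infinity> is generated by the sets B_\<alpha> \<union> {\<infinity>}, i.e. consists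
  of the supersets of finite intersections of such sets.\<close>
definition gap_space :: "('i \<Rightarrow> nat set) \<Rightarrow> enat topology" where
  "gap_space B = topology (\<lambda>U. \<infinity> \<in> U \<longrightarrow>
      (\<exists>F. finite F \<and> (\<Inter>\<alpha>\<in>F. enat ` B \<alpha>) \<union> {\<infinity>} \<subseteq> U))"

definition converges_to_inf :: "enat topology \<Rightarrow> nat set \<Rightarrow> bool" where
  "converges_to_inf X E \<longleftrightarrow>
     (\<forall>U. openin X U \<and> \<infinity> \<in> U \<longrightarrow> finite {n\<in>E. enat n \<notin> U})"

definition frechet_space :: "'a topology \<Rightarrow> bool" where
  "frechet_space X \<longleftrightarrow>
     (\<forall>S x. S \<subseteq> topspace X \<and> x \<in> X closure_of S \<longrightarrow>
        (\<exists>\<sigma>::nat \<Rightarrow> 'a. range \<sigma> \<subseteq> S \<and> limitin X \<sigma> x sequentially))"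

definition alpha1_space :: "'a topology \<Rightarrow> bool" where
  "alpha1_space X \<longleftrightarrow>
     (\<forall>x \<in> topspace X. \<forall>s :: nat \<Rightarrow> nat \<Rightarrow> 'a.
        (\<forall>n. range (s n) \<subseteq> topspace X \<and> limitin X (s n) x sequentially) \<longrightarrow>
        (\<exists>t :: nat \<Rightarrow> 'a. range t \<subseteq> topspace X \<and> limitin X t x sequentially \<and>
                         (\<forall>n. finite (range (s n) - range t))))"

end

theory Submission imports Defs begin

(* Neighbourhoods of \<infinity> are generated by the B_\<alpha>, so E converges to \<infinity> iff E \<subseteq>* B_\<alpha>
   for every \<alpha>. Every A_\<alpha> is almost contained in every B_\<gamma>, so by tightness this
   is equivalent to E \<subseteq>* A_\<alpha> for some \<alpha>.
   If \<infinity> lies in the closure of S \<subseteq> \<omega>, then either some point of S lies in every B_\<alpha>,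
   or S meets every B_\<alpha> in an infinite set; by tightness S then meets some A_\<alpha> in an
   infinite set, which converges to \<infinity>.
   Countably many sequences converging to \<infinity> are almost contained in sets A_\<alpha>_n; as
   countable subsets of \<omega>_1 are bounded, they are all almost contained in one A_\<beta>, and
   the part of their union inside A_\<beta> converges to \<infinity>. *)

lemma almost_subset_trans: "X \<subseteq>\<^sup>* Y \<Longrightarrow> Y \<subseteq>\<^sup>* Z \<Longrightarrow> X \<subseteq>\<^sup>* Z"
  unfolding almost_subset_def by (rule finite_subset[of _ "(X - Y) \<union> (Y - Z)"]) auto

lemma subset_imp_almost_subset: "X \<subseteq> Y \<Longrightarrow> X \<subseteq>\<^sup>* Y"
  by (metis almost_subset_def Diff_eq_empty_iff finite.emptyI)

lemma almost_subset_Compl_iff: "X \<subseteq>\<^sup>* - D \<longleftrightarrow> finite (D \<inter> X)"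
  by (simp add: almost_subset_def Diff_eq Int_commute)

lemma infinite_Int_or_mem_Inter:
  assumes "\<And>F. finite F \<Longrightarrow> D \<inter> (\<Inter>\<alpha>\<in>F. B \<alpha>) \<noteq> {}"
  shows "(\<forall>\<alpha>. infinite (D \<inter> B \<alpha>)) \<or> (\<exists>n\<in>D. \<forall>\<alpha>. n \<in> B \<alpha>)"
proof (rule disjCI)
  assume "\<not> (\<exists>n\<in>D. \<forall>\<alpha>. n \<in> B \<alpha>)"
  then obtain f where f: "\<And>n. n \<in> D \<Longrightarrow> n \<notin> B (f n)" by metis
  show "\<forall>\<alpha>. infinite (D \<inter> B \<alpha>)"
  proof (intro allI notI)
    fix \<alpha> assume "finite (D \<inter> B \<alpha>)"
    \<comment> \<open>so \<alpha> and the indices f n, n \<in> D \<inter> B \<alpha>, form a finite family\<close>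
    then obtain n where "n \<in> D \<inter> B \<alpha>" "\<forall>\<beta>\<in>f ` (D \<inter> B \<alpha>). n \<in> B \<beta>"
      using assms[of "insert \<alpha> (f ` (D \<inter> B \<alpha>))"] by auto
    with f show False by blast
  qed
qed

lemma omega1_countable_bounded:
  assumes "omega1_type TYPE('i::wellorder)" "countable (I :: 'i set)"
  shows "\<exists>\<beta>. \<forall>i\<in>I. i < \<beta>"
proof (rule ccontr)
  assume "\<not> ?thesis"
  then have "UNIV \<subseteq> (\<Union>i\<in>I. insert i {b. b < i})"
    by (auto simp: not_less le_less)
  moreover have "countable (\<Union>i\<in>I. insert i {b. b < i})"
    using assms unfolding omega1_type_def by auto
  ultimately show False
    using assms(1) countable_subset unfolding omega1_type_def by blast
qed

lemma istopology_gap_space: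
  "istopology (\<lambda>U. \<infinity> \<in> U \<longrightarrow> (\<exists>F. finite F \<and> (\<Inter>\<alpha>\<in>F. enat ` B \<alpha>) \<union> {\<infinity>} \<subseteq> U))"
  unfolding istopology_def
proof (intro conjI allI impI ballI)
  fix S T
  assume "\<infinity> \<in> S \<longrightarrow> (\<exists>F. finite F \<and> (\<Inter>\<alpha>\<in>F. enat ` B \<alpha>) \<union> {\<infinity>} \<subseteq> S)"
    and "\<infinity> \<in> T \<longrightarrow> (\<exists>F. finite F \<and> (\<Inter>\<alpha>\<in>F. enat ` B \<alpha>) \<union> {\<infinity>} \<subseteq> T)"
    and "\<infinity> \<in> S \<inter> T"
  then obtain F G where "finite F" and FS: "(\<Inter>\<alpha>\<in>F. enat ` B \<alpha>) \<union> {\<infinity>} \<subseteq> S"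
    and "finite G" and GT: "(\<Inter>\<alpha>\<in>G. enat ` B \<alpha>) \<union> {\<infinity>} \<subseteq> T"
    by blast
  have "(\<Inter>\<alpha>\<in>F \<union> G. enat ` B \<alpha>) \<union> {\<infinity>}
      = ((\<Inter>\<alpha>\<in>F. enat ` B \<alpha>) \<union> {\<infinity>}) \<inter> ((\<Inter>\<alpha>\<in>G. enat ` B \<alpha>) \<union> {\<infinity>})"
    by (simp only: INT_Un Un_Int_distrib2)
  also have "\<dots> \<subseteq> S \<inter> T"
    using FS GT by (rule Int_mono)
  finally show "\<exists>F. finite F \<and> (\<Inter>\<alpha>\<in>F. enat ` B \<alpha>) \<union> {\<infinity>} \<subseteq> S \<inter> T"
    using \<open>finite F\<close> \<open>finite G\<close> by (intro exI[of _ "F \<union> G"] conjI finite_UnI)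
next
  fix \<K>
  assume "\<forall>U\<in>\<K>. \<infinity> \<in> U \<longrightarrow> (\<exists>F. finite F \<and> (\<Inter>\<alpha>\<in>F. enat ` B \<alpha>) \<union> {\<infinity>} \<subseteq> U)"
    and "\<infinity> \<in> \<Union>\<K>"
  then obtain U F where "U \<in> \<K>" "finite F" "(\<Inter>\<alpha>\<in>F. enat ` B \<alpha>) \<union> {\<infinity>} \<subseteq> U"
    by blast
  then show "\<exists>F. finite F \<and> (\<Inter>\<alpha>\<in>F. enat ` B \<alpha>) \<union> {\<infinity>} \<subseteq> \<Union>\<K>"
    by (meson Union_upper subset_trans)
qed

lemma openin_gap_space:
  "openin (gap_space B) U \<longleftrightarrow>
     (\<infinity> \<in> U \<longrightarrow> (\<exists>F. finite F \<and> (\<Inter>\<alpha>\<in>F. enat ` B \<alpha>) \<union> {\<infinity>} \<subseteq> U))"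
  by (simp only: gap_space_def topology_inverse'[OF istopology_gap_space])

lemma topspace_gap_space [simp]: "topspace (gap_space B) = UNIV"
  using openin_subset[of "gap_space B" UNIV] by (auto simp: openin_gap_space)

lemma openin_gap_space_singleton: "openin (gap_space B) {enat n}"
  by (simp add: openin_gap_space)

lemma openin_gap_space_basic: "openin (gap_space B) (insert \<infinity> (enat ` B \<alpha>))"
  unfolding openin_gap_space by (intro impI exI[of _ "{\<alpha>}"]) auto

lemma limitin_gap_space_enat_iff:
  "limitin (gap_space B) \<sigma> (enat m) sequentially \<longleftrightarrow> finite {j. \<sigma> j \<noteq> enat m}"
  unfolding limitin_def cofinite_eq_sequentially[symmetric] eventually_cofinite
  using openin_gap_space_singleton[of B m]
  by (auto elim!: finite_subset[rotated])

lemma limitin_gap_space_infinity_iff: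
  "limitin (gap_space B) \<sigma> \<infinity> sequentially \<longleftrightarrow>
     (\<forall>\<alpha>. finite {j. \<sigma> j \<notin> insert \<infinity> (enat ` B \<alpha>)})"
  unfolding limitin_def cofinite_eq_sequentially[symmetric] eventually_cofinite
proof (intro iffI allI conjI impI)
  fix \<alpha>
  assume "\<infinity> \<in> topspace (gap_space B) \<and>
    (\<forall>U. openin (gap_space B) U \<and> \<infinity> \<in> U \<longrightarrow> finite {j. \<sigma> j \<notin> U})"
  then show "finite {j. \<sigma> j \<notin> insert \<infinity> (enat ` B \<alpha>)}"
    by (metis insertI1 openin_gap_space_basic)
next
  show "\<infinity> \<in> topspace (gap_space B)" by simp
next
  fix U
  assume fin: "\<forall>\<alpha>. finite {j. \<sigma> j \<notin> insert \<infinity> (enat ` B \<alpha>)}"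
    and "openin (gap_space B) U \<and> \<infinity> \<in> U"
  then obtain F where "finite F" and F: "(\<Inter>\<alpha>\<in>F. enat ` B \<alpha>) \<union> {\<infinity>} \<subseteq> U"
    by (auto simp: openin_gap_space)
  have "{j. \<sigma> j \<notin> U} \<subseteq> (\<Union>\<alpha>\<in>F. {j. \<sigma> j \<notin> insert \<infinity> (enat ` B \<alpha>)})"
    using F by blast
  then show "finite {j. \<not> \<sigma> j \<in> U}"
    using \<open>finite F\<close> fin by (auto elim!: finite_subset)
qed

text \<open>Unlike an enumeration, this sequence also serves for finite E.\<close>
definition set_seq :: "nat set \<Rightarrow> nat \<Rightarrow> enat" where
  "set_seq E j = (if j \<in> E then enat j else \<infinity>)"

lemma converges_to_inf_iff_limitin_set_seq:
  assumes "\<infinity> \<in> topspace X"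
  shows "converges_to_inf X E \<longleftrightarrow> limitin X (set_seq E) \<infinity> sequentially"
proof -
  have "{j. set_seq E j \<notin> U} = {n\<in>E. enat n \<notin> U}" if "\<infinity> \<in> U" for U
    using that by (auto simp: set_seq_def)
  then show ?thesis
    using assms
    unfolding converges_to_inf_def limitin_def cofinite_eq_sequentially[symmetric]
      eventually_cofinite
    by auto
qed

lemma converges_to_inf_gap_space_iff:
  "converges_to_inf (gap_space B) E \<longleftrightarrow> (\<forall>\<alpha>. E \<subseteq>\<^sup>* B \<alpha>)"
proof -
  have "{j. set_seq E j \<notin> insert \<infinity> (enat ` B \<alpha>)} = E - B \<alpha>" for \<alpha>
    by (auto simp: set_seq_def)
  then show ?thesis
    unfolding converges_to_inf_iff_limitin_set_seq[of "gap_space B", simplified]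
      limitin_gap_space_infinity_iff almost_subset_def
    by simp
qed

lemma limitin_enumerate_if_converges_to_inf:
  assumes "converges_to_inf X E" "infinite E" "\<infinity> \<in> topspace X"
  shows "limitin X (\<lambda>j. enat (enumerate E j)) \<infinity> sequentially"
  unfolding limitin_def cofinite_eq_sequentially[symmetric] eventually_cofinite
proof (intro conjI allI impI)
  fix U assume "openin X U \<and> \<infinity> \<in> U"
  then have "finite {n\<in>E. enat n \<notin> U}"
    using assms(1) unfolding converges_to_inf_def by blast
  moreover have "inj (enumerate E)"
    using strict_mono_enumerate[OF assms(2)] by (rule strict_mono_imp_inj_on)
  ultimately have "finite (enumerate E -` {n\<in>E. enat n \<notin> U})"
    by (rule finite_vimageI)
  also have "enumerate E -` {n\<in>E. enat n \<notin> U} = {j. enat (enumerate E j) \<notin> U}"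
    using enumerate_in_set[OF assms(2)] by auto
  finally show "finite {j. enat (enumerate E j) \<notin> U}" .
qed (fact assms(3))

lemma converges_to_inf_range_if_limitin:
  assumes "limitin X \<sigma> \<infinity> sequentially"
  shows "converges_to_inf X (enat -` range \<sigma>)"
  unfolding converges_to_inf_def
proof (intro allI impI)
  fix U assume "openin X U \<and> \<infinity> \<in> U"
  then have "finite {j. \<sigma> j \<notin> U}"
    using assms
    unfolding limitin_def cofinite_eq_sequentially[symmetric] eventually_cofinite by blast
  moreover have "{n \<in> enat -` range \<sigma>. enat n \<notin> U} \<subseteq> the_enat ` \<sigma> ` {j. \<sigma> j \<notin> U}"
  proof
    fix n assume "n \<in> {n \<in> enat -` range \<sigma>. enat n \<notin> U}"
    then obtain j where j: "\<sigma> j = enat n" "enat n \<notin> U" by auto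
    then have "n = the_enat (\<sigma> j)" by simp
    moreover have "\<sigma> j \<in> \<sigma> ` {j. \<sigma> j \<notin> U}" using j by (intro imageI) simp
    ultimately show "n \<in> the_enat ` \<sigma> ` {j. \<sigma> j \<notin> U}" by (rule image_eqI)
  qed
  ultimately show "finite {n \<in> enat -` range \<sigma>. enat n \<notin> U}"
    by (meson finite_imageI finite_subset)
qed

lemma infinity_in_closure_gap_space:
  assumes "\<infinity> \<in> gap_space B closure_of S" "\<infinity> \<notin> S" "finite F"
  shows "enat -` S \<inter> (\<Inter>\<alpha>\<in>F. B \<alpha>) \<noteq> {}"
proof -
  have "openin (gap_space B) ((\<Inter>\<alpha>\<in>F. enat ` B \<alpha>) \<union> {\<infinity>})"
    using assms(3) by (auto simp: openin_gap_space)
  then obtain y where "y \<in> S" "y \<in> (\<Inter>\<alpha>\<in>F. enat ` B \<alpha>) \<union> {\<infinity>}"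
    using assms(1) unfolding in_closure_of by blast
  with assms(2) show ?thesis
    by (cases y) auto
qed

lemma tight_gap_A_almost_subset_B:
  assumes "omega1_type TYPE('i::wellorder)" "tight_gap A (B :: 'i \<Rightarrow> nat set)"
  shows "A \<alpha> \<subseteq>\<^sup>* B \<gamma>"
proof -
  obtain \<delta> where "\<alpha> < \<delta>" "\<gamma> < \<delta>"
    using omega1_countable_bounded[OF assms(1), of "{\<alpha>, \<gamma>}"] by auto
  then have "A \<alpha> \<subseteq>\<^sup>* A \<delta>" "A \<delta> \<subseteq>\<^sup>* B \<gamma>"
    using assms(2) unfolding tight_gap_def by blast+
  then show ?thesis by (rule almost_subset_trans)
qed

lemma tight_gap_converges_to_inf_iff:
  assumes "omega1_type TYPE('i::wellorder)" "tight_gap A (B :: 'i \<Rightarrow> nat set)"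
  shows "converges_to_inf (gap_space B) E \<longleftrightarrow> (\<exists>\<alpha>. E \<subseteq>\<^sup>* A \<alpha>)"
proof
  assume "converges_to_inf (gap_space B) E"
  then have "\<forall>\<alpha>. E \<subseteq>\<^sup>* B \<alpha>" by (simp add: converges_to_inf_gap_space_iff)
  then show "\<exists>\<alpha>. E \<subseteq>\<^sup>* A \<alpha>" using assms(2) unfolding tight_gap_def by blast
next
  assume "\<exists>\<alpha>. E \<subseteq>\<^sup>* A \<alpha>"
  then have "E \<subseteq>\<^sup>* B \<gamma>" for \<gamma>
    using almost_subset_trans tight_gap_A_almost_subset_B[OF assms] by blast
  then show "converges_to_inf (gap_space B) E" by (simp add: converges_to_inf_gap_space_iff)
qed

lemma tight_gap_infinite_Int_A:
  assumes "tight_gap A B" "\<And>\<alpha>. infinite (D \<inter> B \<alpha>)"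
  shows "\<exists>\<alpha>. infinite (D \<inter> A \<alpha>)"
proof (rule ccontr)
  assume "\<nexists>\<alpha>. infinite (D \<inter> A \<alpha>)"
  then have "\<forall>\<alpha>. A \<alpha> \<subseteq>\<^sup>* - D" by (simp add: almost_subset_Compl_iff)
  then obtain \<beta> where "B \<beta> \<subseteq>\<^sup>* - D" using assms(1) unfolding tight_gap_def by blast
  with assms(2) show False by (simp add: almost_subset_Compl_iff)
qed

lemma tight_gap_common_bound:
  assumes "omega1_type TYPE('i::wellorder)" "tight_gap A (B :: 'i \<Rightarrow> nat set)"
    and "\<And>n::nat. E n \<subseteq>\<^sup>* A (a n)"
  shows "\<exists>\<beta>. \<forall>n. E n \<subseteq>\<^sup>* A \<beta>"
proof -
  obtain \<beta> where "\<And>n. a n < \<beta>"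
    using omega1_countable_bounded[OF assms(1), of "range a"] by auto
  then have "A (a n) \<subseteq>\<^sup>* A \<beta>" for n
    using assms(2) unfolding tight_gap_def by blast
  with assms(3) show ?thesis by (meson almost_subset_trans)
qed

lemma frechet_space_gap_space:
  assumes "omega1_type TYPE('i::wellorder)" "tight_gap A (B :: 'i \<Rightarrow> nat set)"
  shows "frechet_space (gap_space B)"
  unfolding frechet_space_def
proof (intro allI impI)
  fix S x
  assume "S \<subseteq> topspace (gap_space B) \<and> x \<in> gap_space B closure_of S"
  then have x: "x \<in> gap_space B closure_of S" by blast
  show "\<exists>\<sigma>. range \<sigma> \<subseteq> S \<and> limitin (gap_space B) \<sigma> x sequentially"
  proof (cases "x \<in> S")
    case True
    then show ?thesis by (intro exI[of _ "\<lambda>_. x"]) auto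
  next
    case False
    have "x = \<infinity>"
    proof (rule ccontr)
      assume "x \<noteq> \<infinity>"
      then obtain m where "x = enat m" by (cases x) auto
      with x False show False
        using openin_gap_space_singleton unfolding in_closure_of by blast
    qed
    define D where "D = enat -` S"
    have "D \<inter> (\<Inter>\<alpha>\<in>F. B \<alpha>) \<noteq> {}" if "finite F" for F
      using infinity_in_closure_gap_space[OF _ _ that] x False \<open>x = \<infinity>\<close>
      unfolding D_def by blast
    then consider "\<forall>\<alpha>. infinite (D \<inter> B \<alpha>)" | n where "n \<in> D" "\<forall>\<alpha>. n \<in> B \<alpha>"
      using infinite_Int_or_mem_Inter by blast
    then show ?thesis
    proof cases
      case 1
      then obtain \<alpha> where \<alpha>: "infinite (D \<inter> A \<alpha>)"
        using tight_gap_infinite_Int_A[OF assms(2)] by blast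
      have "converges_to_inf (gap_space B) (D \<inter> A \<alpha>)"
        using tight_gap_converges_to_inf_iff[OF assms] subset_imp_almost_subset by blast
      then have "limitin (gap_space B) (\<lambda>j. enat (enumerate (D \<inter> A \<alpha>) j)) x sequentially"
        using limitin_enumerate_if_converges_to_inf \<alpha> \<open>x = \<infinity>\<close> by simp
      moreover have "range (\<lambda>j. enat (enumerate (D \<inter> A \<alpha>) j)) \<subseteq> S"
        using range_enumerate[OF \<alpha>] unfolding D_def by auto
      ultimately show ?thesis by blast
    next
      case (2 n)
      \<comment> \<open>the space need not be T1: such a point is a constant sequence converging to \<infinity>\<close>
      then have "limitin (gap_space B) (\<lambda>_. enat n) x sequentially"
        using \<open>x = \<infinity>\<close> by (simp add: limitin_gap_space_infinity_iff)
      with \<open>n \<in> D\<close> show ?thesis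
        unfolding D_def by (intro exI[of _ "\<lambda>_. enat n"]) auto
    qed
  qed
qed

lemma alpha1_space_gap_space:
  assumes "omega1_type TYPE('i::wellorder)" "tight_gap A (B :: 'i \<Rightarrow> nat set)"
  shows "alpha1_space (gap_space B)"
  unfolding alpha1_space_def topspace_gap_space
proof (intro ballI allI impI)
  fix x and s :: "nat \<Rightarrow> nat \<Rightarrow> enat"
  assume "\<forall>n. range (s n) \<subseteq> UNIV \<and> limitin (gap_space B) (s n) x sequentially"
  then have lim: "limitin (gap_space B) (s n) x sequentially" for n by blast
  show "\<exists>t. range t \<subseteq> UNIV \<and> limitin (gap_space B) t x sequentially \<and>
            (\<forall>n. finite (range (s n) - range t))"
  proof (cases x)
    case (enat m)
    have "finite (range (s n) - range (\<lambda>_. x))" for n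
    proof (rule finite_subset)
      show "range (s n) - range (\<lambda>_. x) \<subseteq> s n ` {j. s n j \<noteq> enat m}"
        using enat by auto
      show "finite (s n ` {j. s n j \<noteq> enat m})"
        using lim[of n] enat by (simp add: limitin_gap_space_enat_iff)
    qed
    then show ?thesis by (intro exI[of _ "\<lambda>_. x"]) auto
  next
    case infinity
    define E where "E n = enat -` range (s n)" for n
    have "\<exists>\<alpha>. E n \<subseteq>\<^sup>* A \<alpha>" for n
      using converges_to_inf_range_if_limitin[OF lim[of n, unfolded infinity]]
      unfolding E_def tight_gap_converges_to_inf_iff[OF assms] .
    then obtain a where "E n \<subseteq>\<^sup>* A (a n)" for n by metis
    then obtain \<beta> where \<beta>: "E n \<subseteq>\<^sup>* A \<beta>" for n
      using tight_gap_common_bound[OF assms] by blast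
    define E' where "E' = (\<Union>n. E n \<inter> A \<beta>)"
    have "converges_to_inf (gap_space B) E'"
      unfolding tight_gap_converges_to_inf_iff[OF assms] E'_def
      by (blast intro: subset_imp_almost_subset)
    then have "limitin (gap_space B) (set_seq E') x sequentially"
      using infinity by (simp add: converges_to_inf_iff_limitin_set_seq)
    moreover have "range (s n) - range (set_seq E') \<subseteq> insert \<infinity> (enat ` (E n - A \<beta>))" for n
    proof
      fix y assume y: "y \<in> range (s n) - range (set_seq E')"
      show "y \<in> insert \<infinity> (enat ` (E n - A \<beta>))"
      proof (cases y)
        case (enat k)
        then have "k \<in> E n" using y unfolding E_def by auto
        moreover have "set_seq E' k \<noteq> y" using y by blast
        ultimately show ?thesis using enat unfolding E'_def set_seq_def by (auto split: if_split_asm)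
      qed simp
    qed
    moreover have "finite (insert \<infinity> (enat ` (E n - A \<beta>)))" for n
      using \<beta> unfolding almost_subset_def by simp
    ultimately show ?thesis by (meson finite_subset subset_UNIV)
  qed
qed

theorem mainTheorem7:
  fixes A B :: "'i::wellorder \<Rightarrow> nat set"
  assumes "omega1_type TYPE('i)"
    and "tight_gap A B"
  shows "(\<forall>E. infinite E \<longrightarrow>
            (converges_to_inf (gap_space B) E \<longleftrightarrow> (\<exists>\<alpha>. E \<subseteq>\<^sup>* A \<alpha>)))
       \<and> frechet_space (gap_space B) \<and> alpha1_space (gap_space B)"
  using tight_gap_converges_to_inf_iff[OF assms] frechet_space_gap_space[OF assms]
    alpha1_space_gap_space[OF assms]
  by blast

end
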